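(* Let $p\in\{1,2\}$, $\varepsilon\ge0$ (with $\varepsilon=0$ when $p=2$), and let $\hat\nu$ be an optimal barycenter, i.e. a minimizer of $\Psi_p$. (i) If $\tilde\nu$ is the output of the reference algorithm with reference index $1$, then $\Psi_p(\tilde\nu)\le\frac{1+\varepsilon}{\lambda_1}\Psi_p(\hat\nu)$. If instead the reference index $j$ is chosen at random with probability $\lambda_j$ (and $\tilde\nu$ is the output of the reference algorithm with reference index $j$), then $\mathbb{E}[\Psi_p(\tilde\nu)]\le2(1+\varepsilon)\Psi_p(\hat\nu)$. (ii) If $\tilde\nu$ is the output of the pairwise algorithm, then $\Psi_p(\tilde\nu)\le2(1+\varepsilon)\Psi_p(\hat\nu)$.
   Context: $\|\cdot\|$ is the Euclidean norm on $\mathbb{R}^d$. For finitely supported probability measures $\mu,\nu$ on $\mathbb{R}^d$, $\mathcal{W}_p^p(\mu,\nu)\coloneqq\min_{\pi\in\Pi(\mu,\nu)}\int\|x-y\|^p\,d\pi$, with $\Pi(\mu,\nu)$ the set of couplings. Fix $N\ge2$, $\lambda\in\Delta_N\coloneqq\{\lambda\in(0,1)^N:\sum_i\lambda_i=1\}$, and discrete probability measures $\mu^i=\sum_{l=1}^{n_i}\mu^i_l\delta(x^i_l)$, $i=1,\dots,N$, with positive weights and pairwise distinct points for each $i$. $\Psi_p(\nu)\coloneqq\sum_{i=1}^N\lambda_i\mathcal{W}_p^p(\nu,\mu^i)$. Reference algorithm with reference index $j$ (parameters $p$, $\varepsilon$): let $\pi^{jj}\coloneqq\sum_k\mu^j_k\delta(x^j_k,x^j_k)$,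 and for $i\neq j$ let $\pi^{ji}=\sum_{k,l}\pi^{ji}_{k,l}\delta(x^j_k,x^i_l)\in\Pi(\mu^j,\mu^i)$ be an optimal plan for cost $\|x-y\|^p$ (so $\pi^{jj}_{k,l}=\mu^j_k$ if $l=k$ and $0$ otherwise). For $k=1,\dots,n_j$ let $f^j_k(m)\coloneqq\sum_{i=1}^N\lambda_i\sum_{l=1}^{n_i}\frac{\pi^{ji}_{k,l}}{\mu^j_k}\|m-x^i_l\|^p$ and choose $m^j_k$ with $f^j_k(m^j_k)\le(1+\varepsilon)\min_{m\in\mathbb{R}^d}f^j_k(m)$ (for $p=2$, $m^j_k$ is the exact minimizer, the weighted mean). The output is $\tilde\nu\coloneqq\sum_{k=1}^{n_j}\mu^j_k\delta(m^j_k)$. Pairwise algorithm (parameters $p$, $\varepsilon$): for all $i$ let $\pi^{ii}\coloneqq\sum_k\mu^i_k\delta(x^i_k,x^i_k)$; for $i<j$ let $\pi^{ij}=\sum_{k,l}\pi^{ij}_{k,l}\delta(x^i_k,x^j_l)\in\Pi(\mu^i,\mu^j)$ be an optimal plan for cost $\|x-y\|^p$, and $\pi^{ji}_{l,k}\coloneqq\pi^{ij}_{k,l}$ (the transposed plan). For each $i$ and $k=1,\dots,n_i$ let $f^i_k(m)\coloneqq\sum_{j=1}^N\lambda_j\sum_{l=1}^{n_j}\frac{\pi^{ij}_{k,l}}{\mu^i_k}\|m-x^j_l\|^p$ and choose $m^i_k$ with $f^i_k(m^i_k)\le(1+\varepsilon)\min_m f^i_k(m)$ (exact weighted mean for $p=2$).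 The output is $\tilde\nu\coloneqq\sum_{i=1}^N\lambda_i\sum_{k=1}^{n_i}\mu^i_k\delta(m^i_k)$. *)

theory Defs
  imports "HOL-Analysis.Analysis"
begin

text \<open>Finitely supported probability measures on a Euclidean space are represented
  by their weight functions: nu x is the mass of the atom at x.\<close>

definition supp :: "('a \<Rightarrow> real) \<Rightarrow> 'a set" where
  "supp \<nu> = {x. \<nu> x \<noteq> 0}"

definition is_fprob :: "('a \<Rightarrow> real) \<Rightarrow> bool" where
  "is_fprob \<nu> \<longleftrightarrow> (\<forall>x. \<nu> x \<ge> 0) \<and> finite (supp \<nu>) \<and> (\<Sum>x\<in>supp \<nu>. \<nu> x) = 1"

text \<open>Couplings of finitely supported measures: pi x y is the mass moved from x to y.\<close>
definition is_coupling :: "('a \<Rightarrow> real) \<Rightarrow> ('a \<Rightarrow> real) \<Rightarrow> ('a \<Rightarrow> 'a \<Rightarrow> real) \<Rightarrow> bool" where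
  "is_coupling \<mu> \<nu> \<pi> \<longleftrightarrow>
     (\<forall>x y. \<pi> x y \<ge> 0) \<and>
     (\<forall>x y. \<pi> x y \<noteq> 0 \<longrightarrow> x \<in> supp \<mu> \<and> y \<in> supp \<nu>) \<and>
     (\<forall>x. (\<Sum>y\<in>supp \<nu>. \<pi> x y) = \<mu> x) \<and>
     (\<forall>y. (\<Sum>x\<in>supp \<mu>. \<pi> x y) = \<nu> y)"

definition tcost :: "nat \<Rightarrow> ('a::real_normed_vector \<Rightarrow> real) \<Rightarrow> ('a \<Rightarrow> real) \<Rightarrow> ('a \<Rightarrow> 'a \<Rightarrow> real) \<Rightarrow> real" where
  "tcost p \<mu> \<nu> \<pi> = (\<Sum>x\<in>supp \<mu>. \<Sum>y\<in>supp \<nu>. \<pi> x y * norm (x - y) ^ p)"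

text \<open>W_p^p(mu,nu): the minimum (attained, hence equal to the infimum) of the transport cost.\<close>
definition Wpp :: "nat \<Rightarrow> ('a::real_normed_vector \<Rightarrow> real) \<Rightarrow> ('a \<Rightarrow> real) \<Rightarrow> real" where
  "Wpp p \<mu> \<nu> = Inf {tcost p \<mu> \<nu> \<pi> | \<pi>. is_coupling \<mu> \<nu> \<pi>}"

definition optimal_plan :: "nat \<Rightarrow> ('a::real_normed_vector \<Rightarrow> real) \<Rightarrow> ('a \<Rightarrow> real) \<Rightarrow> ('a \<Rightarrow> 'a \<Rightarrow> real) \<Rightarrow> bool" where
  "optimal_plan p \<mu> \<nu> \<pi> \<longleftrightarrow> is_coupling \<mu> \<nu> \<pi> \<and> tcost p \<mu> \<nu> \<pi> = Wpp p \<mu> \<nu>"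

definition Psi :: "nat \<Rightarrow> nat \<Rightarrow> (nat \<Rightarrow> real) \<Rightarrow> (nat \<Rightarrow> 'a::real_normed_vector \<Rightarrow> real) \<Rightarrow> ('a \<Rightarrow> real) \<Rightarrow> real" where
  "Psi p N lam \<mu> \<nu> = (\<Sum>i\<in>{1..N}. lam i * Wpp p \<nu> (\<mu> i))"

definition diag_plan :: "('a \<Rightarrow> real) \<Rightarrow> 'a \<Rightarrow> 'a \<Rightarrow> real" where
  "diag_plan \<mu> x y = (if x = y then \<mu> x else 0)"

definition push :: "('a \<Rightarrow> real) \<Rightarrow> ('a \<Rightarrow> 'b) \<Rightarrow> 'b \<Rightarrow> real" where
  "push \<mu> m z = (\<Sum>x\<in>{x\<in>supp \<mu>. m x = z}. \<mu> x)"

definition fobj :: "nat \<Rightarrow> nat \<Rightarrow> (nat \<Rightarrow> real) \<Rightarrow> (nat \<Rightarrow> 'a::real_normed_vector \<Rightarrow> real)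
    \<Rightarrow> ('a \<Rightarrow> real) \<Rightarrow> (nat \<Rightarrow> 'a \<Rightarrow> 'a \<Rightarrow> real) \<Rightarrow> 'a \<Rightarrow> 'a \<Rightarrow> real" where
  "fobj p N lam \<mu> \<mu>0 \<rho> x m =
     (\<Sum>i\<in>{1..N}. lam i * (\<Sum>y\<in>supp (\<mu> i). \<rho> i x y / \<mu>0 x * norm (m - y) ^ p))"

text \<open>Admissible data of the reference algorithm with reference index j:
  plans pi i (from mu j to mu i) and chosen points m x for atoms x of mu j.\<close>
definition ref_spec :: "nat \<Rightarrow> real \<Rightarrow> nat \<Rightarrow> (nat \<Rightarrow> real) \<Rightarrow> (nat \<Rightarrow> 'a::real_normed_vector \<Rightarrow> real)
    \<Rightarrow> nat \<Rightarrow> (nat \<Rightarrow> 'a \<Rightarrow> 'a \<Rightarrow> real) \<Rightarrow> ('a \<Rightarrow> 'a) \<Rightarrow> bool" where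
  "ref_spec p \<epsilon> N lam \<mu> j \<pi> m \<longleftrightarrow>
     \<pi> j = diag_plan (\<mu> j) \<and>
     (\<forall>i\<in>{1..N}. i \<noteq> j \<longrightarrow> optimal_plan p (\<mu> j) (\<mu> i) (\<pi> i)) \<and>
     (\<forall>x\<in>supp (\<mu> j).
        fobj p N lam \<mu> (\<mu> j) \<pi> x (m x) \<le> (1 + \<epsilon>) * Inf (range (fobj p N lam \<mu> (\<mu> j) \<pi> x)))"

text \<open>Admissible data of the pairwise algorithm: plans pi i j from mu i to mu j and
  chosen points m i x for atoms x of mu i.\<close>
definition pair_spec :: "nat \<Rightarrow> real \<Rightarrow> nat \<Rightarrow> (nat \<Rightarrow> real) \<Rightarrow> (nat \<Rightarrow> 'a::real_normed_vector \<Rightarrow> real)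
    \<Rightarrow> (nat \<Rightarrow> nat \<Rightarrow> 'a \<Rightarrow> 'a \<Rightarrow> real) \<Rightarrow> (nat \<Rightarrow> 'a \<Rightarrow> 'a) \<Rightarrow> bool" where
  "pair_spec p \<epsilon> N lam \<mu> \<pi> m \<longleftrightarrow>
     (\<forall>i\<in>{1..N}. \<pi> i i = diag_plan (\<mu> i)) \<and>
     (\<forall>i\<in>{1..N}. \<forall>j\<in>{1..N}. i < j \<longrightarrow>
        optimal_plan p (\<mu> i) (\<mu> j) (\<pi> i j) \<and> \<pi> j i = (\<lambda>x y. \<pi> i j y x)) \<and>
     (\<forall>i\<in>{1..N}. \<forall>x\<in>supp (\<mu> i).
        fobj p N lam \<mu> (\<mu> i) (\<pi> i) x (m i x) \<le> (1 + \<epsilon>) * Inf (range (fobj p N lam \<mu> (\<mu> i) (\<pi> i) x)))"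

definition pair_output :: "nat \<Rightarrow> (nat \<Rightarrow> real) \<Rightarrow> (nat \<Rightarrow> 'a \<Rightarrow> real) \<Rightarrow> (nat \<Rightarrow> 'a \<Rightarrow> 'a) \<Rightarrow> 'a \<Rightarrow> real" where
  "pair_output N lam \<mu> m z = (\<Sum>i\<in>{1..N}. lam i * push (\<mu> i) (m i) z)"

end

theory Submission
  imports Defs
begin

text \<open>Both algorithms are compared with the input measures. Moving each atom of a
  reference measure to a (1 + \<epsilon>)-minimizer of its local objective costs at most (1 + \<epsilon>)
  times leaving it in place, so the reference output satisfies
  Psi(output) \<le> (1 + \<epsilon>) Psi(\<mu> j), and the pairwise output
  Psi(output) \<le> (1 + \<epsilon>) \<Sum>i lam i Psi(\<mu> i).

  Conversely, let \<nu> be any finitely supported measure with couplings \<gamma> i to \<mu> i.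
  Gluing \<gamma> j and \<gamma> i along \<nu> couples \<mu> j with \<mu> i. Conditionally on an atom z
  of \<nu>, for p = 1 the triangle inequality through z, and for p = 2 the expansion of
  |x - y|^2 around z together with Cauchy-Schwarz, give
  lam j Psi(\<mu> j) \<le> \<Sum>i lam i cost(\<gamma> i) and \<Sum>j lam j Psi(\<mu> j) \<le> 2 \<Sum>i lam i cost(\<gamma> i).
  Choosing the \<gamma> i nearly optimal turns the right-hand sides into Psi(\<nu>).\<close>

lemma norm_weighted_sum_sq_le:
  fixes v :: "'b \<Rightarrow> 'a::real_inner" and w :: "'b \<Rightarrow> real"
  assumes "\<forall>i\<in>S. 0 \<le> w i"
  shows "(norm (\<Sum>i\<in>S. w i *\<^sub>R v i))\<^sup>2 \<le> (\<Sum>i\<in>S. w i) * (\<Sum>i\<in>S. w i * (norm (v i))\<^sup>2)"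
proof -
  have "norm (\<Sum>i\<in>S. w i *\<^sub>R v i) \<le> (\<Sum>i\<in>S. sqrt (w i) * (sqrt (w i) * norm (v i)))"
    using norm_sum[of "\<lambda>i. w i *\<^sub>R v i" S] assms
    by (simp add: mult.assoc[symmetric] cong: sum.cong)
  then have "(norm (\<Sum>i\<in>S. w i *\<^sub>R v i))\<^sup>2 \<le> (\<Sum>i\<in>S. sqrt (w i) * (sqrt (w i) * norm (v i)))\<^sup>2"
    by (intro power_mono) auto
  also have "\<dots> \<le> (\<Sum>i\<in>S. (sqrt (w i))\<^sup>2) * (\<Sum>i\<in>S. (sqrt (w i) * norm (v i))\<^sup>2)"
    by (rule Cauchy_Schwarz_ineq_sum)
  also have "\<dots> = (\<Sum>i\<in>S. w i) * (\<Sum>i\<in>S. w i * (norm (v i))\<^sup>2)"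
    using assms by (simp add: power_mult_distrib)
  finally show ?thesis .
qed

lemma sum_product_weights_split:
  "(\<Sum>x\<in>X. \<Sum>y\<in>Y. a x * c y * (f x + g y)) = (\<Sum>x\<in>X. a x * f x) * sum c Y + sum a X * (\<Sum>y\<in>Y. c y * (g y :: real))"
proof -
  have "(\<Sum>x\<in>X. \<Sum>y\<in>Y. a x * c y * (f x + g y)) = (\<Sum>x\<in>X. a x * f x * sum c Y + a x * (\<Sum>y\<in>Y. c y * g y))"
    by (simp add: algebra_simps sum.distrib sum_distrib_left)
  then show ?thesis
    by (simp add: sum.distrib sum_distrib_right)
qed

lemma sum_weighted_swap:
  "(\<Sum>i\<in>I. a i * (\<Sum>j\<in>J. b j * h i j)) = (\<Sum>j\<in>J. b j * (\<Sum>i\<in>I. a i * (h i j :: real)))"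
  unfolding sum_distrib_left by (subst sum.swap) (simp add: mult.left_commute)

lemma product_cost_le_triangle:
  fixes z :: "'a::real_normed_vector"
  assumes "\<forall>x\<in>X. 0 \<le> a x" "\<forall>y\<in>Y. 0 \<le> c y" "sum a X = 1" "sum c Y = 1"
  shows "(\<Sum>x\<in>X. \<Sum>y\<in>Y. a x * c y * norm (x - y))
    \<le> (\<Sum>x\<in>X. a x * norm (z - x)) + (\<Sum>y\<in>Y. c y * norm (z - y))"
proof -
  have "norm (x - y) \<le> norm (z - x) + norm (z - y)" for x y :: 'a
    using norm_diff_triangle_le[of x z "norm (z - x)" y "norm (z - y)"] by (simp add: norm_minus_commute)
  then have "(\<Sum>x\<in>X. \<Sum>y\<in>Y. a x * c y * norm (x - y))
      \<le> (\<Sum>x\<in>X. \<Sum>y\<in>Y. a x * c y * (norm (z - x) + norm (z - y)))"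
    using assms(1,2) by (intro sum_mono mult_left_mono) auto
  also have "\<dots> = (\<Sum>x\<in>X. a x * norm (z - x)) + (\<Sum>y\<in>Y. c y * norm (z - y))"
    using assms(3,4) by (simp add: sum_product_weights_split)
  finally show ?thesis .
qed

lemma product_cost_sq_eq:
  fixes z :: "'a::real_inner"
  assumes "sum a X = 1" "sum c Y = 1"
  shows "(\<Sum>x\<in>X. \<Sum>y\<in>Y. a x * c y * (norm (x - y))\<^sup>2)
    = (\<Sum>x\<in>X. a x * (norm (z - x))\<^sup>2) + (\<Sum>y\<in>Y. c y * (norm (z - y))\<^sup>2)
      - 2 * inner (\<Sum>x\<in>X. a x *\<^sub>R (x - z)) (\<Sum>y\<in>Y. c y *\<^sub>R (y - z))"
proof -
  have sq: "(norm (x - y))\<^sup>2 = ((norm (z - x))\<^sup>2 + (norm (z - y))\<^sup>2) - 2 * inner (x - z) (y - z)" for x y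
    unfolding power2_norm_eq_inner by (simp add: inner_diff_left inner_diff_right inner_commute algebra_simps)
  have "(\<Sum>x\<in>X. \<Sum>y\<in>Y. a x * c y * (norm (x - y))\<^sup>2)
      = (\<Sum>x\<in>X. \<Sum>y\<in>Y. a x * c y * ((norm (z - x))\<^sup>2 + (norm (z - y))\<^sup>2) - 2 * (a x * c y * inner (x - z) (y - z)))"
  proof (intro sum.cong refl)
    fix x y
    show "a x * c y * (norm (x - y))\<^sup>2
      = a x * c y * ((norm (z - x))\<^sup>2 + (norm (z - y))\<^sup>2) - 2 * (a x * c y * inner (x - z) (y - z))"
      using sq[of x y] by (simp add: right_diff_distrib)
  qed
  also have "\<dots> = (\<Sum>x\<in>X. \<Sum>y\<in>Y. a x * c y * ((norm (z - x))\<^sup>2 + (norm (z - y))\<^sup>2))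
      - 2 * (\<Sum>x\<in>X. \<Sum>y\<in>Y. a x * c y * inner (x - z) (y - z))"
    by (simp only: sum_subtractf sum_distrib_left)
  also have "(\<Sum>x\<in>X. \<Sum>y\<in>Y. a x * c y * inner (x - z) (y - z))
      = inner (\<Sum>x\<in>X. a x *\<^sub>R (x - z)) (\<Sum>y\<in>Y. c y *\<^sub>R (y - z))"
    by (simp add: inner_sum_left inner_sum_right sum_distrib_left mult.assoc)
      (subst sum.swap, simp add: mult.left_commute)
  finally show ?thesis
    using assms by (simp add: sum_product_weights_split)
qed

text \<open>For p = 1 the displacements are zero (triangle inequality); for p = 2 they are the
  mean displacements from z, and the bound is an identity.\<close>

lemma product_costs_decompose:
  fixes A :: "nat \<Rightarrow> 'a::real_inner \<Rightarrow> real" and z :: 'a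
  assumes p: "p = 1 \<or> p = 2" and A_nonneg: "\<forall>i\<in>I. \<forall>y\<in>Y i. 0 \<le> A i y"
    and A_sum: "\<forall>i\<in>I. sum (A i) (Y i) = 1"
  obtains d :: "nat \<Rightarrow> 'a" where "\<forall>i\<in>I. (norm (d i))\<^sup>2 \<le> (\<Sum>y\<in>Y i. A i y * norm (z - y) ^ p)"
    and "\<forall>i\<in>I. \<forall>k\<in>I. (\<Sum>x\<in>Y k. \<Sum>y\<in>Y i. A k x * A i y * norm (x - y) ^ p)
      \<le> (\<Sum>y\<in>Y k. A k y * norm (z - y) ^ p) + (\<Sum>y\<in>Y i. A i y * norm (z - y) ^ p)
         - 2 * inner (d k) (d i)"
  using p
proof
  assume p1: "p = 1"
  show ?thesis
  proof (rule that[of "\<lambda>_. 0"]; intro ballI)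
    fix i k
    assume "i \<in> I" "k \<in> I"
    then show "(\<Sum>x\<in>Y k. \<Sum>y\<in>Y i. A k x * A i y * norm (x - y) ^ p)
      \<le> (\<Sum>y\<in>Y k. A k y * norm (z - y) ^ p) + (\<Sum>y\<in>Y i. A i y * norm (z - y) ^ p) - 2 * inner 0 0"
      using product_cost_le_triangle[of "Y k" "A k" "Y i" "A i" z] A_nonneg A_sum p1 by simp
  qed (use A_nonneg in \<open>auto intro: sum_nonneg\<close>)
next
  assume p2: "p = 2"
  let ?d = "\<lambda>i. \<Sum>y\<in>Y i. A i y *\<^sub>R (y - z)"
  show ?thesis
  proof (rule that[of ?d]; intro ballI)
    fix i
    assume "i \<in> I"
    then show "(norm (?d i))\<^sup>2 \<le> (\<Sum>y\<in>Y i. A i y * norm (z - y) ^ p)"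
      using norm_weighted_sum_sq_le[of "Y i" "A i" "\<lambda>y. y - z"] A_nonneg A_sum p2
      by (simp add: norm_minus_commute)
  next
    fix i k
    assume "i \<in> I" "k \<in> I"
    then show "(\<Sum>x\<in>Y k. \<Sum>y\<in>Y i. A k x * A i y * norm (x - y) ^ p)
      \<le> (\<Sum>y\<in>Y k. A k y * norm (z - y) ^ p) + (\<Sum>y\<in>Y i. A i y * norm (z - y) ^ p)
         - 2 * inner (?d k) (?d i)"
      using product_cost_sq_eq[of "A k" "Y k" "A i" "Y i" z] A_sum p2 by simp
  qed
qed

lemma completing_square_le:
  fixes u v :: "'a::real_inner"
  assumes "(norm u)\<^sup>2 \<le> b" and "(norm v)\<^sup>2 \<le> (1 - t) * R"
  shows "t * ((1 - t) * b + R - 2 * inner u v) \<le> t * b + R"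
proof -
  have "0 \<le> (norm (t *\<^sub>R u + v))\<^sup>2"
    by simp
  also have "\<dots> = t\<^sup>2 * (norm u)\<^sup>2 + 2 * t * inner u v + (norm v)\<^sup>2"
    unfolding power2_norm_eq_inner
    by (simp add: inner_add_left inner_add_right inner_commute algebra_simps power2_eq_square)
  also have "\<dots> \<le> t\<^sup>2 * b + 2 * t * inner u v + (1 - t) * R"
    using mult_left_mono[OF assms(1), of "t\<^sup>2"] assms(2) by simp
  also have "\<dots> = t * b + R - t * ((1 - t) * b + R - 2 * inner u v)"
    by (simp add: algebra_simps power2_eq_square)
  finally show ?thesis
    by simp
qed

text \<open>Cauchy-Schwarz bounds |\<Sum>i\<noteq>j lam i d i|^2 by (1 - lam j) \<Sum>i\<noteq>j lam i b i.\<close>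

lemma off_diagonal_sum_le:
  fixes d :: "nat \<Rightarrow> 'a::real_inner"
  assumes fin: "finite I" and j: "j \<in> I" and lam: "\<forall>i\<in>I. 0 \<le> lam i" "sum lam I = 1"
    and d: "\<forall>i\<in>I. (norm (d i))\<^sup>2 \<le> b i"
    and g: "\<forall>i\<in>I. \<forall>k\<in>I. g k i \<le> b k + b i - 2 * inner (d k) (d i)"
  shows "lam j * (\<Sum>i\<in>I-{j}. lam i * g j i) \<le> (\<Sum>i\<in>I. lam i * b i)"
proof -
  define R where "R = (\<Sum>i\<in>I-{j}. lam i * b i)"
  define s where "s = (\<Sum>i\<in>I-{j}. lam i *\<^sub>R d i)"
  have L: "(\<Sum>i\<in>I-{j}. lam i) = 1 - lam j"
    using lam(2) fin j by (simp add: sum_diff1)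
  have "(\<Sum>i\<in>I-{j}. lam i * g j i) \<le> (\<Sum>i\<in>I-{j}. lam i * (b j + b i - 2 * inner (d j) (d i)))"
    using lam g j by (intro sum_mono mult_left_mono) auto
  also have "\<dots> = (1 - lam j) * b j + R - 2 * inner (d j) s"
    unfolding R_def s_def L[symmetric]
    by (simp add: algebra_simps sum.distrib sum_distrib_left sum_distrib_right inner_sum_right sum_subtractf)
  finally have "lam j * (\<Sum>i\<in>I-{j}. lam i * g j i) \<le> lam j * ((1 - lam j) * b j + R - 2 * inner (d j) s)"
    using lam j by (simp add: mult_left_mono)
  also have "\<dots> \<le> lam j * b j + R"
  proof (rule completing_square_le)
    show "(norm (d j))\<^sup>2 \<le> b j"
      using d j by blast
    have "(norm s)\<^sup>2 \<le> (1 - lam j) * (\<Sum>i\<in>I-{j}. lam i * (norm (d i))\<^sup>2)"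
      unfolding s_def L[symmetric] using lam by (intro norm_weighted_sum_sq_le) auto
    also have "\<dots> \<le> (1 - lam j) * R"
      unfolding R_def L[symmetric] using lam d by (intro mult_left_mono sum_mono sum_nonneg) auto
    finally show "(norm s)\<^sup>2 \<le> (1 - lam j) * R" .
  qed
  also have "\<dots> = (\<Sum>i\<in>I. lam i * b i)"
    unfolding R_def using fin j by (simp add: sum.remove)
  finally show ?thesis .
qed

text \<open>The diagonal terms of the upper bound are nonnegative, and the full double sum of
  the bound equals 2 \<Sum>i lam i b i - 2 |\<Sum>i lam i d i|^2.\<close>

lemma weighted_off_diagonal_sum_le:
  fixes d :: "nat \<Rightarrow> 'a::real_inner"
  assumes fin: "finite I" and lam: "\<forall>i\<in>I. 0 \<le> lam i" "sum lam I = 1"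
    and d: "\<forall>i\<in>I. (norm (d i))\<^sup>2 \<le> b i"
    and g: "\<forall>i\<in>I. \<forall>k\<in>I. g k i \<le> b k + b i - 2 * inner (d k) (d i)"
  shows "(\<Sum>j\<in>I. lam j * (\<Sum>i\<in>I-{j}. lam i * g j i)) \<le> 2 * (\<Sum>i\<in>I. lam i * b i)"
proof -
  define h where "h j i = b j + b i - 2 * inner (d j) (d i)" for j i
  define D where "D = (\<Sum>i\<in>I. lam i *\<^sub>R d i)"
  have h_diag: "0 \<le> h j j" if "j \<in> I" for j
    using d that unfolding h_def by (simp add: power2_norm_eq_inner[symmetric])
  have "(\<Sum>j\<in>I. lam j * (\<Sum>i\<in>I-{j}. lam i * g j i)) \<le> (\<Sum>j\<in>I. lam j * (\<Sum>i\<in>I-{j}. lam i * h j i))"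
    using lam g unfolding h_def by (intro sum_mono mult_left_mono) auto
  also have "\<dots> \<le> (\<Sum>j\<in>I. lam j * (\<Sum>i\<in>I. lam i * h j i))"
    using fin lam h_diag by (intro sum_mono mult_left_mono sum_mono2) auto
  also have "\<dots> = (\<Sum>j\<in>I. \<Sum>i\<in>I. lam j * lam i * (b j + b i))
      - 2 * (\<Sum>j\<in>I. \<Sum>i\<in>I. lam j * lam i * inner (d j) (d i))"
    unfolding h_def
    by (simp add: algebra_simps sum_subtractf sum_distrib_left flip: sum.distrib)
  also have "(\<Sum>j\<in>I. \<Sum>i\<in>I. lam j * lam i * (b j + b i)) = 2 * (\<Sum>i\<in>I. lam i * b i)"
    using lam(2) by (simp add: sum_product_weights_split)
  also have "(\<Sum>j\<in>I. \<Sum>i\<in>I. lam j * lam i * inner (d j) (d i)) = inner D D"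
    unfolding D_def
    by (simp add: inner_sum_left inner_sum_right sum_distrib_left mult.assoc inner_commute mult.left_commute)
  also have "2 * (\<Sum>i\<in>I. lam i * b i) - 2 * inner D D \<le> 2 * (\<Sum>i\<in>I. lam i * b i)"
    by simp
  finally show ?thesis .
qed

lemma fprob_supp_pos: "is_fprob \<mu> \<Longrightarrow> x \<in> supp \<mu> \<Longrightarrow> 0 < \<mu> x"
  unfolding is_fprob_def supp_def by (simp add: order_le_neq_trans)

lemma fprob_finite_supp: "is_fprob \<mu> \<Longrightarrow> finite (supp \<mu>)"
  unfolding is_fprob_def by blast

lemma notin_supp: "x \<notin> supp \<mu> \<Longrightarrow> \<mu> x = 0"
  unfolding supp_def by simp

lemma tcost_nonneg: "is_coupling \<mu> \<nu> \<pi> \<Longrightarrow> 0 \<le> tcost p \<mu> \<nu> \<pi>"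
  unfolding tcost_def is_coupling_def by (auto intro!: sum_nonneg)

lemma is_coupling_product: "is_fprob \<mu> \<Longrightarrow> is_fprob \<nu> \<Longrightarrow> is_coupling \<mu> \<nu> (\<lambda>x y. \<mu> x * \<nu> y)"
  unfolding is_coupling_def is_fprob_def
  by (auto simp: supp_def sum_distrib_left[symmetric] sum_distrib_right[symmetric])

lemma tcost_set_nonempty:
  assumes "is_fprob \<mu>" "is_fprob \<nu>"
  shows "{tcost p \<mu> \<nu> \<pi> | \<pi>. is_coupling \<mu> \<nu> \<pi>} \<noteq> {}"
  using is_coupling_product[OF assms] by auto

lemma Wpp_le_tcost: "is_coupling \<mu> \<nu> \<pi> \<Longrightarrow> Wpp p \<mu> \<nu> \<le> tcost p \<mu> \<nu> \<pi>"
  unfolding Wpp_def by (rule cInf_lower) (auto simp: bdd_below_def intro!: exI[of _ 0] tcost_nonneg)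

lemma Wpp_nonneg:
  assumes "is_fprob \<mu>" "is_fprob \<nu>"
  shows "0 \<le> Wpp p \<mu> \<nu>"
  unfolding Wpp_def by (rule cInf_greatest[OF tcost_set_nonempty[OF assms]]) (auto intro: tcost_nonneg)

lemma Wpp_approx:
  assumes "is_fprob \<mu>" "is_fprob \<nu>" "0 < \<delta>"
  obtains \<pi> where "is_coupling \<mu> \<nu> \<pi>" "tcost p \<mu> \<nu> \<pi> < Wpp p \<mu> \<nu> + \<delta>"
proof -
  have "Wpp p \<mu> \<nu> < Wpp p \<mu> \<nu> + \<delta>" using assms(3) by simp
  from cInf_lessD[OF tcost_set_nonempty[OF assms(1,2)] this[unfolded Wpp_def]]
  show ?thesis using that unfolding Wpp_def by blast
qed

lemma is_coupling_diag_plan: "is_fprob \<mu> \<Longrightarrow> is_coupling \<mu> \<mu> (diag_plan \<mu>)"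
  unfolding is_coupling_def diag_plan_def
  by (auto simp: is_fprob_def supp_def sum.delta sum.delta')

lemma tcost_diag_plan: "1 \<le> p \<Longrightarrow> tcost p \<mu> \<mu> (diag_plan \<mu>) = 0"
  unfolding tcost_def diag_plan_def by (auto intro!: sum.neutral)

lemma Wpp_self:
  assumes "is_fprob \<mu>" "1 \<le> p"
  shows "Wpp p \<mu> \<mu> = 0"
proof -
  have "Wpp p \<mu> \<mu> \<le> 0"
    using Wpp_le_tcost[OF is_coupling_diag_plan[OF assms(1)], of p] tcost_diag_plan[OF assms(2), of \<mu>] by simp
  then show ?thesis
    using Wpp_nonneg[OF assms(1) assms(1), of p] by simp
qed

lemma optimal_plan_diag_plan: "is_fprob \<mu> \<Longrightarrow> 1 \<le> p \<Longrightarrow> optimal_plan p \<mu> \<mu> (diag_plan \<mu>)"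
  by (simp add: optimal_plan_def is_coupling_diag_plan tcost_diag_plan Wpp_self)

lemma is_coupling_transpose: "is_coupling \<mu> \<nu> \<pi> \<Longrightarrow> is_coupling \<nu> \<mu> (\<lambda>x y. \<pi> y x)"
  unfolding is_coupling_def by auto

lemma tcost_transpose: "tcost p \<nu> \<mu> (\<lambda>x y. \<pi> y x) = tcost p \<mu> \<nu> \<pi>"
  unfolding tcost_def by (subst sum.swap) (simp only: norm_minus_commute)

lemma Wpp_commute: "Wpp p \<mu> \<nu> = Wpp p \<nu> \<mu>"
proof -
  have "{tcost p \<mu> \<nu> \<pi> | \<pi>. is_coupling \<mu> \<nu> \<pi>} \<subseteq> {tcost p \<nu> \<mu> \<pi> | \<pi>. is_coupling \<nu> \<mu> \<pi>}"
    for \<mu> \<nu> :: "'a \<Rightarrow> real"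
  proof
    fix t
    assume "t \<in> {tcost p \<mu> \<nu> \<pi> | \<pi>. is_coupling \<mu> \<nu> \<pi>}"
    then obtain \<pi> where "t = tcost p \<mu> \<nu> \<pi>" "is_coupling \<mu> \<nu> \<pi>"
      by blast
    then have "t = tcost p \<nu> \<mu> (\<lambda>x y. \<pi> y x)" "is_coupling \<nu> \<mu> (\<lambda>x y. \<pi> y x)"
      by (simp_all add: tcost_transpose[of p \<nu> \<mu> \<pi>] is_coupling_transpose)
    then show "t \<in> {tcost p \<nu> \<mu> \<pi> | \<pi>. is_coupling \<nu> \<mu> \<pi>}"
      by blast
  qed
  then have "{tcost p \<mu> \<nu> \<pi> | \<pi>. is_coupling \<mu> \<nu> \<pi>} = {tcost p \<nu> \<mu> \<pi> | \<pi>. is_coupling \<nu> \<mu> \<pi>}"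
    by (intro subset_antisym)
  then show ?thesis
    unfolding Wpp_def by simp
qed

lemma optimal_plan_transpose:
  "optimal_plan p \<mu> \<nu> \<pi> \<Longrightarrow> optimal_plan p \<nu> \<mu> (\<lambda>x y. \<pi> y x)"
  unfolding optimal_plan_def
  by (simp add: is_coupling_transpose tcost_transpose[of p \<nu> \<mu> \<pi>] Wpp_commute[of p \<nu> \<mu>])

lemma sum_coupling_fibre_snd:
  assumes "is_coupling \<nu> \<mu> \<gamma>" "finite (supp \<nu>)" "finite (supp \<mu>)"
  shows "\<mu> x = (\<Sum>s\<in>{s\<in>supp \<nu> \<times> supp \<mu>. snd s = x}. \<gamma> (fst s) (snd s))"
proof -
  have "(\<Sum>s\<in>{s\<in>supp \<nu> \<times> supp \<mu>. snd s = x}. \<gamma> (fst s) (snd s))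
      = (\<Sum>s\<in>supp \<nu> \<times> supp \<mu>. if snd s = x then \<gamma> (fst s) (snd s) else 0)"
    using assms(2,3) by (intro sum.inter_filter) simp
  also have "\<dots> = (\<Sum>z\<in>supp \<nu>. \<Sum>x'\<in>supp \<mu>. if x' = x then \<gamma> z x' else 0)"
    by (simp add: sum.cartesian_product split_beta)
  also have "\<dots> = \<mu> x"
    using assms by (cases "x \<in> supp \<mu>") (simp_all add: sum.delta' notin_supp is_coupling_def)
  finally show ?thesis ..
qed

lemma Psi_input_eq:
  assumes "is_fprob (\<mu> j)" "1 \<le> p" "j \<in> {1..N}"
  shows "Psi p N lam \<mu> (\<mu> j) = (\<Sum>i\<in>{1..N}-{j}. lam i * Wpp p (\<mu> j) (\<mu> i))"
  unfolding Psi_def sum.remove[OF finite_atLeastAtMost assms(3)] using assms by (simp add: Wpp_self)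

lemma sum_fibres_supp:
  assumes "finite S" and "supp \<nu> \<subseteq> f ` S" and "\<And>s. s \<in> S \<Longrightarrow> \<nu> (f s) = 0 \<Longrightarrow> h s = 0"
  shows "(\<Sum>z\<in>supp \<nu>. \<Sum>s\<in>{s\<in>S. f s = z}. h s) = (\<Sum>s\<in>S. h s)"
proof -
  have "(\<Sum>z\<in>supp \<nu>. \<Sum>s\<in>{s\<in>S. f s = z}. h s) = (\<Sum>z\<in>f ` S. \<Sum>s\<in>{s\<in>S. f s = z}. h s)"
    using assms by (intro sum.mono_neutral_left) (auto simp: supp_def intro!: sum.neutral)
  also have "\<dots> = (\<Sum>s\<in>S. h s)"
    using assms(1) by (rule sum.image_gen[symmetric])
  finally show ?thesis .
qed

lemma pushforward_null_fibres:
  assumes S: "finite S" and fin: "finite (supp \<mu>)"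
    and w_nonneg: "\<forall>s\<in>S. \<forall>y\<in>supp \<mu>. 0 \<le> w s y"
    and w_row: "\<forall>s\<in>S. (\<Sum>y\<in>supp \<mu>. w s y) = \<kappa> s"
    and \<nu>: "\<forall>z. \<nu> z = (\<Sum>s\<in>{s\<in>S. f s = z}. \<kappa> s)"
  shows "supp \<nu> \<subseteq> f ` S"
    and "\<And>s y. s \<in> S \<Longrightarrow> \<nu> (f s) = 0 \<Longrightarrow> y \<in> supp \<mu> \<Longrightarrow> w s y = 0"
proof -
  show "supp \<nu> \<subseteq> f ` S"
  proof
    fix z
    assume "z \<in> supp \<nu>"
    then have "sum \<kappa> {s\<in>S. f s = z} \<noteq> 0"
      using \<nu> by (simp add: supp_def)
    then obtain s where "s \<in> S" "f s = z"
      by (metis (mono_tags, lifting) empty_Collect_eq sum.empty)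
    then show "z \<in> f ` S" by blast
  qed
  fix s y
  assume s: "s \<in> S" "\<nu> (f s) = 0" and y: "y \<in> supp \<mu>"
  have "\<forall>s\<in>S. 0 \<le> \<kappa> s"
    using w_row w_nonneg by (auto intro!: sum_nonneg simp flip: w_row[rule_format])
  then have "\<forall>s'\<in>{s'\<in>S. f s' = f s}. \<kappa> s' = 0"
    using s(2) \<nu> S by (subst sum_nonneg_eq_0_iff[symmetric]) auto
  then have "(\<Sum>y\<in>supp \<mu>. w s y) = 0"
    using s(1) w_row by simp
  then show "w s y = 0"
    using s(1) y w_nonneg fin by (subst (asm) sum_nonneg_eq_0_iff) auto
qed

text \<open>w couples the mass function \<kappa> on S with \<mu>; relabelling its sources by f
  couples the image \<nu> of \<kappa> under f with \<mu>.\<close>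

lemma is_coupling_pushforward_plan:
  assumes S: "finite S" and fin: "finite (supp \<mu>)"
    and w_nonneg: "\<forall>s\<in>S. \<forall>y\<in>supp \<mu>. 0 \<le> w s y"
    and w_row: "\<forall>s\<in>S. (\<Sum>y\<in>supp \<mu>. w s y) = \<kappa> s"
    and w_col: "\<forall>y\<in>supp \<mu>. (\<Sum>s\<in>S. w s y) = \<mu> y"
    and \<nu>: "\<forall>z. \<nu> z = (\<Sum>s\<in>{s\<in>S. f s = z}. \<kappa> s)"
  shows "is_coupling \<nu> \<mu> (\<lambda>z y. if y \<in> supp \<mu> then \<Sum>s\<in>{s\<in>S. f s = z}. w s y else 0)"
  unfolding is_coupling_def
proof (intro conjI allI)
  note null = pushforward_null_fibres[OF S fin w_nonneg w_row \<nu>]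
  fix z y
  show "0 \<le> (if y \<in> supp \<mu> then \<Sum>s\<in>{s\<in>S. f s = z}. w s y else 0)"
    using w_nonneg by (auto intro!: sum_nonneg)
  show "(if y \<in> supp \<mu> then \<Sum>s\<in>{s\<in>S. f s = z}. w s y else 0) \<noteq> 0 \<longrightarrow> z \<in> supp \<nu> \<and> y \<in> supp \<mu>"
    using null(2) unfolding supp_def by (auto split: if_splits intro: sum.neutral)
  have "(\<Sum>y\<in>supp \<mu>. if y \<in> supp \<mu> then \<Sum>s\<in>{s\<in>S. f s = z}. w s y else 0)
      = (\<Sum>s\<in>{s\<in>S. f s = z}. \<Sum>y\<in>supp \<mu>. w s y)"
    by (simp add: sum.swap[of _ "supp \<mu>"])
  also have "\<dots> = (\<Sum>s\<in>{s\<in>S. f s = z}. \<kappa> s)"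
    using w_row by (intro sum.cong) auto
  also have "\<dots> = \<nu> z"
    using \<nu> by simp
  finally show "(\<Sum>y\<in>supp \<mu>. if y \<in> supp \<mu> then \<Sum>s\<in>{s\<in>S. f s = z}. w s y else 0) = \<nu> z" .
  show "(\<Sum>z\<in>supp \<nu>. if y \<in> supp \<mu> then \<Sum>s\<in>{s\<in>S. f s = z}. w s y else 0) = \<mu> y"
    using sum_fibres_supp[OF S null(1), of "\<lambda>s. w s y"] null(2) w_col
    by (cases "y \<in> supp \<mu>") (simp_all add: notin_supp)
qed

lemma Wpp_le_pushforward_cost:
  fixes \<mu> \<nu> :: "'a::real_normed_vector \<Rightarrow> real"
  assumes S: "finite S" and fin: "finite (supp \<mu>)"
    and w_nonneg: "\<forall>s\<in>S. \<forall>y\<in>supp \<mu>. 0 \<le> w s y"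
    and w_row: "\<forall>s\<in>S. (\<Sum>y\<in>supp \<mu>. w s y) = \<kappa> s"
    and "\<forall>y\<in>supp \<mu>. (\<Sum>s\<in>S. w s y) = \<mu> y"
    and \<nu>: "\<forall>z. \<nu> z = (\<Sum>s\<in>{s\<in>S. f s = z}. \<kappa> s)"
  shows "Wpp p \<nu> \<mu> \<le> (\<Sum>s\<in>S. \<Sum>y\<in>supp \<mu>. w s y * norm (f s - y) ^ p)"
proof -
  note null = pushforward_null_fibres[OF S fin w_nonneg w_row \<nu>]
  let ?\<pi> = "\<lambda>z y. if y \<in> supp \<mu> then \<Sum>s\<in>{s\<in>S. f s = z}. w s y else 0"
  have "Wpp p \<nu> \<mu> \<le> tcost p \<nu> \<mu> ?\<pi>"
    using is_coupling_pushforward_plan[OF assms] by (rule Wpp_le_tcost)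
  also have "tcost p \<nu> \<mu> ?\<pi> = (\<Sum>z\<in>supp \<nu>. \<Sum>s\<in>{s\<in>S. f s = z}. \<Sum>y\<in>supp \<mu>. w s y * norm (f s - y) ^ p)"
    unfolding tcost_def by (simp add: sum_distrib_right sum.swap[of _ "supp \<mu>"])
  also have "\<dots> = (\<Sum>s\<in>S. \<Sum>y\<in>supp \<mu>. w s y * norm (f s - y) ^ p)"
    using null(2) by (intro sum_fibres_supp[OF S null(1)]) (auto intro!: sum.neutral)
  finally show ?thesis .
qed

lemma Wpp_push_le:
  assumes "is_fprob \<mu>0" "is_fprob \<mu>1" "is_coupling \<mu>0 \<mu>1 \<rho>"
  shows "Wpp p (push \<mu>0 m) \<mu>1 \<le> (\<Sum>x\<in>supp \<mu>0. \<Sum>y\<in>supp \<mu>1. \<rho> x y * norm (m x - y) ^ p)"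
  using assms
  by (intro Wpp_le_pushforward_cost[where \<kappa> = \<mu>0])
    (auto simp: fprob_finite_supp is_coupling_def push_def)

lemma pair_output_eq_push_Sigma:
  assumes "\<forall>i\<in>{1..N}. is_fprob (\<mu> i)"
  shows "pair_output N lam \<mu> m z =
    (\<Sum>s\<in>{s\<in>Sigma {1..N} (\<lambda>i. supp (\<mu> i)). m (fst s) (snd s) = z}. lam (fst s) * \<mu> (fst s) (snd s))"
proof -
  have fin: "finite (Sigma {1..N} (\<lambda>i. supp (\<mu> i)))"
    using assms by (auto simp: fprob_finite_supp)
  have "pair_output N lam \<mu> m z =
      (\<Sum>i\<in>{1..N}. \<Sum>x\<in>supp (\<mu> i). if m i x = z then lam i * \<mu> i x else 0)"
    unfolding pair_output_def push_def using assms
    by (simp add: sum.inter_filter fprob_finite_supp sum_distrib_left if_distrib cong: if_cong)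
  also have "\<dots> = (\<Sum>s\<in>Sigma {1..N} (\<lambda>i. supp (\<mu> i)).
      if m (fst s) (snd s) = z then lam (fst s) * \<mu> (fst s) (snd s) else 0)"
    using assms by (subst sum.Sigma) (auto simp: fprob_finite_supp split_beta)
  finally show ?thesis using fin by (simp add: sum.inter_filter)
qed

lemma Wpp_pair_output_le:
  fixes \<mu> :: "nat \<Rightarrow> 'a::real_normed_vector \<Rightarrow> real"
  assumes lam: "\<forall>i\<in>{1..N}. 0 \<le> lam i" "sum lam {1..N} = 1"
    and fprob: "\<forall>i\<in>{1..N}. is_fprob (\<mu> i)" "is_fprob \<mu>'"
    and coup: "\<forall>i\<in>{1..N}. is_coupling (\<mu> i) \<mu>' (\<rho> i)"
  shows "Wpp p (pair_output N lam \<mu> m) \<mu>' \<le>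
     (\<Sum>i\<in>{1..N}. lam i * (\<Sum>x\<in>supp (\<mu> i). \<Sum>y\<in>supp \<mu>'. \<rho> i x y * norm (m i x - y) ^ p))"
proof -
  let ?S = "Sigma {1..N} (\<lambda>i. supp (\<mu> i))"
  have Sigma_sum: "(\<Sum>s\<in>?S. h s) = (\<Sum>i\<in>{1..N}. \<Sum>x\<in>supp (\<mu> i). h (i, x))" for h :: "nat \<times> 'a \<Rightarrow> real"
    using fprob by (subst sum.Sigma) (auto simp: fprob_finite_supp)
  have "Wpp p (pair_output N lam \<mu> m) \<mu>' \<le>
      (\<Sum>s\<in>?S. \<Sum>y\<in>supp \<mu>'. lam (fst s) * \<rho> (fst s) (snd s) y * norm (m (fst s) (snd s) - y) ^ p)"
  proof (rule Wpp_le_pushforward_cost[where \<kappa> = "\<lambda>s. lam (fst s) * \<mu> (fst s) (snd s)"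
        and w = "\<lambda>s y. lam (fst s) * \<rho> (fst s) (snd s) y" and f = "\<lambda>s. m (fst s) (snd s)"])
    show "finite ?S" "finite (supp \<mu>')"
      using fprob by (auto simp: fprob_finite_supp)
    show "\<forall>s\<in>?S. \<forall>y\<in>supp \<mu>'. 0 \<le> lam (fst s) * \<rho> (fst s) (snd s) y"
      using lam coup by (auto simp: is_coupling_def)
    show "\<forall>s\<in>?S. (\<Sum>y\<in>supp \<mu>'. lam (fst s) * \<rho> (fst s) (snd s) y) = lam (fst s) * \<mu> (fst s) (snd s)"
      using coup by (auto simp: is_coupling_def simp flip: sum_distrib_left)
    show "\<forall>y\<in>supp \<mu>'. (\<Sum>s\<in>?S. lam (fst s) * \<rho> (fst s) (snd s) y) = \<mu>' y"
    proof
      fix y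
      have "(\<Sum>s\<in>?S. lam (fst s) * \<rho> (fst s) (snd s) y) = (\<Sum>i\<in>{1..N}. lam i * \<mu>' y)"
        unfolding Sigma_sum using coup by (simp add: is_coupling_def flip: sum_distrib_left)
      then show "(\<Sum>s\<in>?S. lam (fst s) * \<rho> (fst s) (snd s) y) = \<mu>' y"
        using lam(2) by (simp flip: sum_distrib_right)
    qed
    show "\<forall>z. pair_output N lam \<mu> m z =
        (\<Sum>s\<in>{s\<in>?S. m (fst s) (snd s) = z}. lam (fst s) * \<mu> (fst s) (snd s))"
      using pair_output_eq_push_Sigma[OF fprob(1)] by blast
  qed
  also have "\<dots> = (\<Sum>i\<in>{1..N}. lam i * (\<Sum>x\<in>supp (\<mu> i). \<Sum>y\<in>supp \<mu>'. \<rho> i x y * norm (m i x - y) ^ p))"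
    unfolding Sigma_sum by (simp add: sum_distrib_left mult.assoc)
  finally show ?thesis .
qed

lemma fobj_nonneg:
  assumes "\<forall>i\<in>{1..N}. 0 \<le> lam i" "\<forall>i\<in>{1..N}. is_coupling \<mu>0 (\<mu> i) (\<rho> i)" "0 < \<mu>0 x"
  shows "0 \<le> fobj p N lam \<mu> \<mu>0 \<rho> x t"
  using assms unfolding fobj_def is_coupling_def
  by (auto intro!: sum_nonneg mult_nonneg_nonneg divide_nonneg_pos)

lemma fobj_scaled:
  assumes "0 < \<mu>0 x"
  shows "\<mu>0 x * fobj p N lam \<mu> \<mu>0 \<rho> x t =
    (\<Sum>i\<in>{1..N}. lam i * (\<Sum>y\<in>supp (\<mu> i). \<rho> i x y * norm (t - y) ^ p))"
  using assms unfolding fobj_def by (simp add: sum_distrib_left mult.left_commute)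

text \<open>Each local objective is compared with the choice t = x, which leaves the atom x
  in place; summing over the atoms gives the optimal transport costs from \<mu>0.\<close>

lemma local_step_cost_le:
  fixes \<mu> :: "nat \<Rightarrow> 'a::real_normed_vector \<Rightarrow> real"
  assumes eps: "0 \<le> \<epsilon>" and lam: "\<forall>i\<in>{1..N}. 0 \<le> lam i" and fprob: "is_fprob \<mu>0"
    and opt: "\<forall>i\<in>{1..N}. optimal_plan p \<mu>0 (\<mu> i) (\<rho> i)"
    and m: "\<forall>x\<in>supp \<mu>0. fobj p N lam \<mu> \<mu>0 \<rho> x (m x) \<le> (1 + \<epsilon>) * Inf (range (fobj p N lam \<mu> \<mu>0 \<rho> x))"
  shows "(\<Sum>i\<in>{1..N}. lam i * (\<Sum>x\<in>supp \<mu>0. \<Sum>y\<in>supp (\<mu> i). \<rho> i x y * norm (m x - y) ^ p))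
     \<le> (1 + \<epsilon>) * Psi p N lam \<mu> \<mu>0"
proof -
  have coup: "\<forall>i\<in>{1..N}. is_coupling \<mu>0 (\<mu> i) (\<rho> i)"
    using opt by (simp add: optimal_plan_def)
  have swap: "(\<Sum>i\<in>{1..N}. lam i * (\<Sum>x\<in>supp \<mu>0. \<Sum>y\<in>supp (\<mu> i). \<rho> i x y * norm (g x - y) ^ p))
      = (\<Sum>x\<in>supp \<mu>0. \<mu>0 x * fobj p N lam \<mu> \<mu>0 \<rho> x (g x))" for g
    using fprob_supp_pos[OF fprob]
    by (simp add: fobj_scaled sum_distrib_left sum.swap[of _ "supp \<mu>0"])
  have "\<mu>0 x * fobj p N lam \<mu> \<mu>0 \<rho> x (m x) \<le> (1 + \<epsilon>) * (\<mu>0 x * fobj p N lam \<mu> \<mu>0 \<rho> x x)"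
    if x: "x \<in> supp \<mu>0" for x
  proof -
    have pos: "0 < \<mu>0 x"
      using fprob_supp_pos[OF fprob x] .
    have "Inf (range (fobj p N lam \<mu> \<mu>0 \<rho> x)) \<le> fobj p N lam \<mu> \<mu>0 \<rho> x x"
      using fobj_nonneg[OF lam coup pos] by (intro cInf_lower) (auto simp: bdd_below_def)
    then have "fobj p N lam \<mu> \<mu>0 \<rho> x (m x) \<le> (1 + \<epsilon>) * fobj p N lam \<mu> \<mu>0 \<rho> x x"
      using m x eps by (meson order_trans mult_left_mono add_nonneg_nonneg zero_le_one)
    then show ?thesis
      using pos by (simp add: mult.left_commute)
  qed
  then have "(\<Sum>x\<in>supp \<mu>0. \<mu>0 x * fobj p N lam \<mu> \<mu>0 \<rho> x (m x))
      \<le> (1 + \<epsilon>) * (\<Sum>x\<in>supp \<mu>0. \<mu>0 x * fobj p N lam \<mu> \<mu>0 \<rho> x x)"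
    by (simp add: sum_distrib_left sum_mono)
  also have "(\<Sum>x\<in>supp \<mu>0. \<mu>0 x * fobj p N lam \<mu> \<mu>0 \<rho> x x) = Psi p N lam \<mu> \<mu>0"
    using swap[of "\<lambda>x. x"] opt unfolding Psi_def optimal_plan_def tcost_def by simp
  finally show ?thesis
    using swap[of m] by simp
qed

lemma Psi_push_le:
  fixes \<mu> :: "nat \<Rightarrow> 'a::real_normed_vector \<Rightarrow> real"
  assumes "0 \<le> \<epsilon>" and lam: "\<forall>i\<in>{1..N}. 0 \<le> lam i"
    and fprob: "is_fprob \<mu>0" "\<forall>i\<in>{1..N}. is_fprob (\<mu> i)"
    and opt: "\<forall>i\<in>{1..N}. optimal_plan p \<mu>0 (\<mu> i) (\<rho> i)"
    and "\<forall>x\<in>supp \<mu>0. fobj p N lam \<mu> \<mu>0 \<rho> x (m x) \<le> (1 + \<epsilon>) * Inf (range (fobj p N lam \<mu> \<mu>0 \<rho> x))"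
  shows "Psi p N lam \<mu> (push \<mu>0 m) \<le> (1 + \<epsilon>) * Psi p N lam \<mu> \<mu>0"
proof -
  have "Psi p N lam \<mu> (push \<mu>0 m)
      \<le> (\<Sum>i\<in>{1..N}. lam i * (\<Sum>x\<in>supp \<mu>0. \<Sum>y\<in>supp (\<mu> i). \<rho> i x y * norm (m x - y) ^ p))"
    unfolding Psi_def using lam fprob opt
    by (intro sum_mono mult_left_mono Wpp_push_le) (auto simp: optimal_plan_def)
  also have "\<dots> \<le> (1 + \<epsilon>) * Psi p N lam \<mu> \<mu>0"
    using local_step_cost_le assms by blast
  finally show ?thesis .
qed

lemma ref_spec_optimal_plans:
  assumes spec: "ref_spec p \<epsilon> N lam \<mu> j \<pi> m" and "is_fprob (\<mu> j)" "1 \<le> p"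
  shows "\<forall>i\<in>{1..N}. optimal_plan p (\<mu> j) (\<mu> i) (\<pi> i)"
proof
  fix i
  assume i: "i \<in> {1..N}"
  show "optimal_plan p (\<mu> j) (\<mu> i) (\<pi> i)"
  proof (cases "i = j")
    case True
    then show ?thesis using assms by (simp add: ref_spec_def optimal_plan_diag_plan)
  next
    case False
    then show ?thesis using spec i by (simp add: ref_spec_def)
  qed
qed

lemma Psi_reference_output_le:
  fixes \<mu> :: "nat \<Rightarrow> 'a::real_normed_vector \<Rightarrow> real"
  assumes "1 \<le> p" "0 \<le> \<epsilon>" "\<forall>i\<in>{1..N}. 0 \<le> lam i" and fprob: "\<forall>i\<in>{1..N}. is_fprob (\<mu> i)"
    and j: "j \<in> {1..N}" and spec: "ref_spec p \<epsilon> N lam \<mu> j \<pi> m"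
  shows "Psi p N lam \<mu> (push (\<mu> j) m) \<le> (1 + \<epsilon>) * Psi p N lam \<mu> (\<mu> j)"
proof (rule Psi_push_le)
  show "\<forall>i\<in>{1..N}. optimal_plan p (\<mu> j) (\<mu> i) (\<pi> i)"
    using ref_spec_optimal_plans[OF spec] fprob j \<open>1 \<le> p\<close> by blast
  show "\<forall>x\<in>supp (\<mu> j). fobj p N lam \<mu> (\<mu> j) \<pi> x (m x) \<le> (1 + \<epsilon>) * Inf (range (fobj p N lam \<mu> (\<mu> j) \<pi> x))"
    using spec by (simp add: ref_spec_def)
qed (use assms in auto)

lemma pair_spec_optimal_plans:
  assumes spec: "pair_spec p \<epsilon> N lam \<mu> \<pi> m" and "\<forall>i\<in>{1..N}. is_fprob (\<mu> i)" "1 \<le> p"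
    and ij: "i \<in> {1..N}" "j \<in> {1..N}"
  shows "optimal_plan p (\<mu> i) (\<mu> j) (\<pi> i j)"
proof (cases i j rule: linorder_cases)
  case less
  then show ?thesis using spec ij by (simp add: pair_spec_def)
next
  case equal
  then show ?thesis using assms by (simp add: pair_spec_def optimal_plan_diag_plan)
next
  case greater
  then have "optimal_plan p (\<mu> j) (\<mu> i) (\<pi> j i)" "\<pi> i j = (\<lambda>x y. \<pi> j i y x)"
    using spec ij unfolding pair_spec_def by blast+
  then show ?thesis by (simp add: optimal_plan_transpose)
qed

lemma Psi_pair_output_le:
  fixes \<mu> :: "nat \<Rightarrow> 'a::real_normed_vector \<Rightarrow> real"
  assumes "1 \<le> p" "0 \<le> \<epsilon>" and lam: "\<forall>i\<in>{1..N}. 0 \<le> lam i" "sum lam {1..N} = 1"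
    and fprob: "\<forall>i\<in>{1..N}. is_fprob (\<mu> i)" and spec: "pair_spec p \<epsilon> N lam \<mu> \<pi> m"
  shows "Psi p N lam \<mu> (pair_output N lam \<mu> m) \<le> (1 + \<epsilon>) * (\<Sum>i\<in>{1..N}. lam i * Psi p N lam \<mu> (\<mu> i))"
proof -
  let ?c = "\<lambda>i j. \<Sum>x\<in>supp (\<mu> i). \<Sum>y\<in>supp (\<mu> j). \<pi> i j x y * norm (m i x - y) ^ p"
  have opt: "\<forall>j\<in>{1..N}. optimal_plan p (\<mu> i) (\<mu> j) (\<pi> i j)" if "i \<in> {1..N}" for i
    using pair_spec_optimal_plans[OF spec fprob \<open>1 \<le> p\<close> that] by blast
  have "Psi p N lam \<mu> (pair_output N lam \<mu> m) \<le> (\<Sum>j\<in>{1..N}. lam j * (\<Sum>i\<in>{1..N}. lam i * ?c i j))"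
    unfolding Psi_def using lam fprob opt
    by (intro sum_mono mult_left_mono Wpp_pair_output_le) (auto simp: optimal_plan_def)
  also have "\<dots> = (\<Sum>i\<in>{1..N}. lam i * (\<Sum>j\<in>{1..N}. lam j * ?c i j))"
    by (rule sum_weighted_swap)
  also have "\<dots> \<le> (\<Sum>i\<in>{1..N}. lam i * ((1 + \<epsilon>) * Psi p N lam \<mu> (\<mu> i)))"
  proof (intro sum_mono mult_left_mono)
    fix i
    assume i: "i \<in> {1..N}"
    have "\<forall>x\<in>supp (\<mu> i). fobj p N lam \<mu> (\<mu> i) (\<pi> i) x (m i x)
        \<le> (1 + \<epsilon>) * Inf (range (fobj p N lam \<mu> (\<mu> i) (\<pi> i) x))"
      using spec i by (simp add: pair_spec_def)
    then show "(\<Sum>j\<in>{1..N}. lam j * ?c i j) \<le> (1 + \<epsilon>) * Psi p N lam \<mu> (\<mu> i)"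
      using local_step_cost_le[OF \<open>0 \<le> \<epsilon>\<close> lam(1) _ opt[OF i]] fprob i by blast
    show "0 \<le> lam i" using lam i by blast
  qed
  finally show ?thesis
    by (simp add: sum_distrib_left mult.left_commute)
qed

text \<open>The conditional law of the target of \<gamma> given its source z; it is a probability
  only for z \<in> supp \<nu> (elsewhere the division is by zero).\<close>

definition cond_plan :: "('a \<Rightarrow> real) \<Rightarrow> ('a \<Rightarrow> 'a \<Rightarrow> real) \<Rightarrow> 'a \<Rightarrow> 'a \<Rightarrow> real" where
  "cond_plan \<nu> \<gamma> z y = \<gamma> z y / \<nu> z"

definition cond_cost ::
    "nat \<Rightarrow> ('a::real_normed_vector \<Rightarrow> real) \<Rightarrow> ('a \<Rightarrow> real) \<Rightarrow> ('a \<Rightarrow> 'a \<Rightarrow> real) \<Rightarrow> 'a \<Rightarrow> real" where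
  "cond_cost p \<nu> \<mu> \<gamma> z = (\<Sum>y\<in>supp \<mu>. cond_plan \<nu> \<gamma> z y * norm (z - y) ^ p)"

definition cross_cost :: "nat \<Rightarrow> ('a::real_normed_vector \<Rightarrow> real)
    \<Rightarrow> ('a \<Rightarrow> real) \<Rightarrow> ('a \<Rightarrow> 'a \<Rightarrow> real) \<Rightarrow> ('a \<Rightarrow> real) \<Rightarrow> ('a \<Rightarrow> 'a \<Rightarrow> real) \<Rightarrow> 'a \<Rightarrow> real" where
  "cross_cost p \<nu> \<mu> \<gamma> \<mu>' \<gamma>' z =
     (\<Sum>x\<in>supp \<mu>. \<Sum>y\<in>supp \<mu>'. cond_plan \<nu> \<gamma> z x * cond_plan \<nu> \<gamma>' z y * norm (x - y) ^ p)"

lemma cond_plan_nonneg: "is_fprob \<nu> \<Longrightarrow> is_coupling \<nu> \<mu> \<gamma> \<Longrightarrow> 0 \<le> cond_plan \<nu> \<gamma> z y"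
  unfolding cond_plan_def is_fprob_def is_coupling_def by simp

lemma sum_cond_plan: "is_coupling \<nu> \<mu> \<gamma> \<Longrightarrow> z \<in> supp \<nu> \<Longrightarrow> (\<Sum>y\<in>supp \<mu>. cond_plan \<nu> \<gamma> z y) = 1"
  unfolding cond_plan_def is_coupling_def supp_def by (simp flip: sum_divide_distrib)

lemma tcost_eq_cond_cost: "tcost p \<nu> \<mu> \<gamma> = (\<Sum>z\<in>supp \<nu>. \<nu> z * cond_cost p \<nu> \<mu> \<gamma> z)"
  unfolding tcost_def cond_cost_def cond_plan_def sum_distrib_left
  by (intro sum.cong refl) (simp add: supp_def)

text \<open>Gluing: conditionally on the atom z of \<nu>, the atoms of \<mu> and \<mu>' are drawn
  independently from the two plans; the joint law of the pair is a coupling of \<mu> and \<mu>'.\<close>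

lemma Wpp_le_cross_cost:
  fixes \<mu> \<mu>' :: "'a::real_normed_vector \<Rightarrow> real"
  assumes fprob: "is_fprob \<nu>" "is_fprob \<mu>" "is_fprob \<mu>'"
    and coup: "is_coupling \<nu> \<mu> \<gamma>" "is_coupling \<nu> \<mu>' \<gamma>'"
  shows "Wpp p \<mu> \<mu>' \<le> (\<Sum>z\<in>supp \<nu>. \<nu> z * cross_cost p \<nu> \<mu> \<gamma> \<mu>' \<gamma>' z)"
proof -
  let ?S = "supp \<nu> \<times> supp \<mu>"
  let ?w = "\<lambda>s y. \<gamma> (fst s) (snd s) * cond_plan \<nu> \<gamma>' (fst s) y"
  have fin: "finite ?S" "finite (supp \<mu>')"
    using fprob by (simp_all add: fprob_finite_supp)
  have row: "\<forall>z. (\<Sum>x\<in>supp \<mu>. \<gamma> z x) = \<nu> z" and col: "\<forall>y. (\<Sum>z\<in>supp \<nu>. \<gamma>' z y) = \<mu>' y"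
    using coup by (simp_all add: is_coupling_def)
  have prod_sum: "(\<Sum>s\<in>?S. h s) = (\<Sum>z\<in>supp \<nu>. \<Sum>x\<in>supp \<mu>. h (z, x))" for h :: "'a \<times> 'a \<Rightarrow> real"
    by (simp add: sum.cartesian_product)
  have "Wpp p \<mu> \<mu>' \<le> (\<Sum>s\<in>?S. \<Sum>y\<in>supp \<mu>'. ?w s y * norm (snd s - y) ^ p)"
  proof (rule Wpp_le_pushforward_cost[where \<kappa> = "\<lambda>s. \<gamma> (fst s) (snd s)" and w = ?w and f = snd])
    show "finite ?S" "finite (supp \<mu>')"
      using fin .
    show "\<forall>s\<in>?S. \<forall>y\<in>supp \<mu>'. 0 \<le> ?w s y"
      using coup(1) cond_plan_nonneg[OF fprob(1) coup(2)]
      by (auto simp: is_coupling_def intro!: mult_nonneg_nonneg)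
    show "\<forall>s\<in>?S. (\<Sum>y\<in>supp \<mu>'. ?w s y) = \<gamma> (fst s) (snd s)"
      using coup(2) by (auto simp: sum_cond_plan simp flip: sum_distrib_left)
    show "\<forall>y\<in>supp \<mu>'. (\<Sum>s\<in>?S. ?w s y) = \<mu>' y"
    proof
      fix y
      have "(\<Sum>s\<in>?S. ?w s y) = (\<Sum>z\<in>supp \<nu>. \<Sum>x\<in>supp \<mu>. \<gamma> z x * cond_plan \<nu> \<gamma>' z y)"
        unfolding prod_sum by simp
      also have "\<dots> = (\<Sum>z\<in>supp \<nu>. \<nu> z * cond_plan \<nu> \<gamma>' z y)"
        using row by (simp flip: sum_distrib_right)
      also have "\<dots> = \<mu>' y"
        using col by (simp add: cond_plan_def supp_def)
      finally show "(\<Sum>s\<in>?S. ?w s y) = \<mu>' y" .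
    qed
    show "\<forall>x. \<mu> x = (\<Sum>s\<in>{s\<in>?S. snd s = x}. \<gamma> (fst s) (snd s))"
      using sum_coupling_fibre_snd[OF coup(1)] fprob(1,2) by (simp add: fprob_finite_supp)
  qed
  also have "\<dots> = (\<Sum>z\<in>supp \<nu>. \<Sum>x\<in>supp \<mu>. \<Sum>y\<in>supp \<mu>'. \<gamma> z x * cond_plan \<nu> \<gamma>' z y * norm (x - y) ^ p)"
    unfolding prod_sum by simp
  also have "\<dots> = (\<Sum>z\<in>supp \<nu>. \<nu> z * cross_cost p \<nu> \<mu> \<gamma> \<mu>' \<gamma>' z)"
    unfolding cross_cost_def sum_distrib_left
    by (intro sum.cong refl) (simp add: cond_plan_def supp_def)
  finally show ?thesis .
qed

lemma cond_costs_decompose: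
  fixes \<mu> :: "nat \<Rightarrow> 'a::real_inner \<Rightarrow> real"
  assumes "p = 1 \<or> p = 2" "is_fprob \<nu>" "\<forall>i\<in>I. is_coupling \<nu> (\<mu> i) (\<gamma> i)" "z \<in> supp \<nu>"
  obtains d :: "nat \<Rightarrow> 'a" where "\<forall>i\<in>I. (norm (d i))\<^sup>2 \<le> cond_cost p \<nu> (\<mu> i) (\<gamma> i) z"
    and "\<forall>i\<in>I. \<forall>k\<in>I. cross_cost p \<nu> (\<mu> k) (\<gamma> k) (\<mu> i) (\<gamma> i) z
      \<le> cond_cost p \<nu> (\<mu> k) (\<gamma> k) z + cond_cost p \<nu> (\<mu> i) (\<gamma> i) z - 2 * inner (d k) (d i)"
proof -
  have "\<forall>i\<in>I. \<forall>y\<in>supp (\<mu> i). 0 \<le> cond_plan \<nu> (\<gamma> i) z y"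
    using cond_plan_nonneg[OF assms(2)] assms(3) by blast
  moreover have "\<forall>i\<in>I. sum (cond_plan \<nu> (\<gamma> i) z) (supp (\<mu> i)) = 1"
    using assms(3) by (auto simp: sum_cond_plan[OF _ assms(4)])
  ultimately obtain d :: "nat \<Rightarrow> 'a" where
    "\<forall>i\<in>I. (norm (d i))\<^sup>2 \<le> (\<Sum>y\<in>supp (\<mu> i). cond_plan \<nu> (\<gamma> i) z y * norm (z - y) ^ p)"
    "\<forall>i\<in>I. \<forall>k\<in>I. (\<Sum>x\<in>supp (\<mu> k). \<Sum>y\<in>supp (\<mu> i).
          cond_plan \<nu> (\<gamma> k) z x * cond_plan \<nu> (\<gamma> i) z y * norm (x - y) ^ p)
      \<le> (\<Sum>y\<in>supp (\<mu> k). cond_plan \<nu> (\<gamma> k) z y * norm (z - y) ^ p)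
         + (\<Sum>y\<in>supp (\<mu> i). cond_plan \<nu> (\<gamma> i) z y * norm (z - y) ^ p) - 2 * inner (d k) (d i)"
    by (rule product_costs_decompose[where A = "\<lambda>i. cond_plan \<nu> (\<gamma> i) z" and Y = "\<lambda>i. supp (\<mu> i)",
          OF assms(1)])
  then show ?thesis
    by (intro that[of d]) (simp_all add: cond_cost_def cross_cost_def)
qed

lemma lam_Psi_input_le_tcost:
  fixes \<mu> :: "nat \<Rightarrow> 'a::real_inner \<Rightarrow> real"
  assumes p: "p = 1 \<or> p = 2" and lam: "\<forall>i\<in>{1..N}. 0 \<le> lam i" "sum lam {1..N} = 1"
    and fprob: "\<forall>i\<in>{1..N}. is_fprob (\<mu> i)" "is_fprob \<nu>"
    and coup: "\<forall>i\<in>{1..N}. is_coupling \<nu> (\<mu> i) (\<gamma> i)" and j: "j \<in> {1..N}"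
  shows "lam j * Psi p N lam \<mu> (\<mu> j) \<le> (\<Sum>i\<in>{1..N}. lam i * tcost p \<nu> (\<mu> i) (\<gamma> i))"
proof -
  let ?b = "\<lambda>z i. cond_cost p \<nu> (\<mu> i) (\<gamma> i) z"
  let ?g = "\<lambda>z k i. cross_cost p \<nu> (\<mu> k) (\<gamma> k) (\<mu> i) (\<gamma> i) z"
  have "lam j * Psi p N lam \<mu> (\<mu> j) = lam j * (\<Sum>i\<in>{1..N}-{j}. lam i * Wpp p (\<mu> j) (\<mu> i))"
    using p fprob j by (auto simp: Psi_input_eq)
  also have "\<dots> \<le> lam j * (\<Sum>i\<in>{1..N}-{j}. lam i * (\<Sum>z\<in>supp \<nu>. \<nu> z * ?g z j i))"
    using lam fprob coup j by (intro mult_left_mono sum_mono Wpp_le_cross_cost) auto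
  also have "\<dots> = (\<Sum>z\<in>supp \<nu>. \<nu> z * (lam j * (\<Sum>i\<in>{1..N}-{j}. lam i * ?g z j i)))"
    by (subst sum_weighted_swap) (simp add: sum_distrib_left mult.left_commute)
  also have "\<dots> \<le> (\<Sum>z\<in>supp \<nu>. \<nu> z * (\<Sum>i\<in>{1..N}. lam i * ?b z i))"
  proof (intro sum_mono mult_left_mono)
    fix z
    assume z: "z \<in> supp \<nu>"
    obtain d :: "nat \<Rightarrow> 'a" where "\<forall>i\<in>{1..N}. (norm (d i))\<^sup>2 \<le> ?b z i"
      and "\<forall>i\<in>{1..N}. \<forall>k\<in>{1..N}. ?g z k i \<le> ?b z k + ?b z i - 2 * inner (d k) (d i)"
      using cond_costs_decompose[OF p fprob(2) coup z] by blast
    then show "lam j * (\<Sum>i\<in>{1..N}-{j}. lam i * ?g z j i) \<le> (\<Sum>i\<in>{1..N}. lam i * ?b z i)"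
      using off_diagonal_sum_le[OF finite_atLeastAtMost j lam, of d "?b z" "?g z"] by blast
    show "0 \<le> \<nu> z"
      using fprob(2) by (simp add: is_fprob_def)
  qed
  also have "\<dots> = (\<Sum>i\<in>{1..N}. lam i * tcost p \<nu> (\<mu> i) (\<gamma> i))"
    unfolding tcost_eq_cond_cost by (rule sum_weighted_swap)
  finally show ?thesis .
qed

lemma weighted_Psi_inputs_le_tcost:
  fixes \<mu> :: "nat \<Rightarrow> 'a::real_inner \<Rightarrow> real"
  assumes p: "p = 1 \<or> p = 2" and lam: "\<forall>i\<in>{1..N}. 0 \<le> lam i" "sum lam {1..N} = 1"
    and fprob: "\<forall>i\<in>{1..N}. is_fprob (\<mu> i)" "is_fprob \<nu>"
    and coup: "\<forall>i\<in>{1..N}. is_coupling \<nu> (\<mu> i) (\<gamma> i)"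
  shows "(\<Sum>j\<in>{1..N}. lam j * Psi p N lam \<mu> (\<mu> j)) \<le> 2 * (\<Sum>i\<in>{1..N}. lam i * tcost p \<nu> (\<mu> i) (\<gamma> i))"
proof -
  let ?b = "\<lambda>z i. cond_cost p \<nu> (\<mu> i) (\<gamma> i) z"
  let ?g = "\<lambda>z k i. cross_cost p \<nu> (\<mu> k) (\<gamma> k) (\<mu> i) (\<gamma> i) z"
  have "(\<Sum>j\<in>{1..N}. lam j * Psi p N lam \<mu> (\<mu> j))
      = (\<Sum>j\<in>{1..N}. lam j * (\<Sum>i\<in>{1..N}-{j}. lam i * Wpp p (\<mu> j) (\<mu> i)))"
    using p fprob by (auto simp: Psi_input_eq intro!: sum.cong)
  also have "\<dots> \<le> (\<Sum>j\<in>{1..N}. lam j * (\<Sum>i\<in>{1..N}-{j}. lam i * (\<Sum>z\<in>supp \<nu>. \<nu> z * ?g z j i)))"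
    using lam fprob coup by (intro sum_mono mult_left_mono Wpp_le_cross_cost) auto
  also have "\<dots> = (\<Sum>j\<in>{1..N}. lam j * (\<Sum>z\<in>supp \<nu>. \<nu> z * (\<Sum>i\<in>{1..N}-{j}. lam i * ?g z j i)))"
    by (rule sum.cong[OF refl], subst sum_weighted_swap, rule refl)
  also have "\<dots> = (\<Sum>z\<in>supp \<nu>. \<nu> z * (\<Sum>j\<in>{1..N}. lam j * (\<Sum>i\<in>{1..N}-{j}. lam i * ?g z j i)))"
    by (rule sum_weighted_swap)
  also have "\<dots> \<le> (\<Sum>z\<in>supp \<nu>. \<nu> z * (2 * (\<Sum>i\<in>{1..N}. lam i * ?b z i)))"
  proof (intro sum_mono mult_left_mono)
    fix z
    assume z: "z \<in> supp \<nu>"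
    obtain d :: "nat \<Rightarrow> 'a" where "\<forall>i\<in>{1..N}. (norm (d i))\<^sup>2 \<le> ?b z i"
      and "\<forall>i\<in>{1..N}. \<forall>k\<in>{1..N}. ?g z k i \<le> ?b z k + ?b z i - 2 * inner (d k) (d i)"
      using cond_costs_decompose[OF p fprob(2) coup z] by blast
    then show "(\<Sum>j\<in>{1..N}. lam j * (\<Sum>i\<in>{1..N}-{j}. lam i * ?g z j i)) \<le> 2 * (\<Sum>i\<in>{1..N}. lam i * ?b z i)"
      using weighted_off_diagonal_sum_le[OF finite_atLeastAtMost lam, of d "?b z" "?g z"] by blast
    show "0 \<le> \<nu> z"
      using fprob(2) by (simp add: is_fprob_def)
  qed
  also have "\<dots> = 2 * (\<Sum>z\<in>supp \<nu>. \<nu> z * (\<Sum>i\<in>{1..N}. lam i * ?b z i))"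
    by (simp add: sum_distrib_left mult.left_commute)
  also have "\<dots> = 2 * (\<Sum>i\<in>{1..N}. lam i * tcost p \<nu> (\<mu> i) (\<gamma> i))"
    unfolding tcost_eq_cond_cost by (subst sum_weighted_swap) (rule refl)
  finally show ?thesis .
qed

lemma le_Psi_if_le_tcost:
  assumes lam: "\<forall>i\<in>{1..N}. 0 \<le> lam i" "sum lam {1..N} = 1"
    and fprob: "\<forall>i\<in>{1..N}. is_fprob (\<mu> i)" "is_fprob \<nu>"
    and le: "\<And>\<gamma>. \<forall>i\<in>{1..N}. is_coupling \<nu> (\<mu> i) (\<gamma> i) \<Longrightarrow>
      X \<le> (\<Sum>i\<in>{1..N}. lam i * tcost p \<nu> (\<mu> i) (\<gamma> i))"
  shows "X \<le> Psi p N lam \<mu> \<nu>"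
proof (rule field_le_epsilon)
  fix e :: real
  assume "0 < e"
  have "\<forall>i\<in>{1..N}. \<exists>\<gamma>. is_coupling \<nu> (\<mu> i) \<gamma> \<and> tcost p \<nu> (\<mu> i) \<gamma> < Wpp p \<nu> (\<mu> i) + e"
  proof
    fix i
    assume "i \<in> {1..N}"
    then obtain \<gamma> where "is_coupling \<nu> (\<mu> i) \<gamma>" "tcost p \<nu> (\<mu> i) \<gamma> < Wpp p \<nu> (\<mu> i) + e"
      using Wpp_approx[OF fprob(2) _ \<open>0 < e\<close>] fprob(1) by blast
    then show "\<exists>\<gamma>. is_coupling \<nu> (\<mu> i) \<gamma> \<and> tcost p \<nu> (\<mu> i) \<gamma> < Wpp p \<nu> (\<mu> i) + e"
      by blast
  qed
  then obtain \<gamma> where \<gamma>: "\<forall>i\<in>{1..N}. is_coupling \<nu> (\<mu> i) (\<gamma> i) \<and> tcost p \<nu> (\<mu> i) (\<gamma> i) < Wpp p \<nu> (\<mu> i) + e"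
    by (metis bchoice)
  then have "X \<le> (\<Sum>i\<in>{1..N}. lam i * tcost p \<nu> (\<mu> i) (\<gamma> i))"
    by (intro le) blast
  also have "\<dots> \<le> (\<Sum>i\<in>{1..N}. lam i * (Wpp p \<nu> (\<mu> i) + e))"
    using \<gamma> lam by (intro sum_mono mult_left_mono) (auto intro: less_imp_le)
  also have "\<dots> = Psi p N lam \<mu> \<nu> + e"
    using lam(2) by (simp add: Psi_def distrib_left sum.distrib flip: sum_distrib_right)
  finally show "X \<le> Psi p N lam \<mu> \<nu> + e" .
qed

lemma lam_Psi_input_le:
  fixes \<mu> :: "nat \<Rightarrow> 'a::real_inner \<Rightarrow> real"
  assumes "p = 1 \<or> p = 2" "\<forall>i\<in>{1..N}. 0 \<le> lam i" "sum lam {1..N} = 1"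
    and "\<forall>i\<in>{1..N}. is_fprob (\<mu> i)" "is_fprob \<nu>" "j \<in> {1..N}"
  shows "lam j * Psi p N lam \<mu> (\<mu> j) \<le> Psi p N lam \<mu> \<nu>"
  using lam_Psi_input_le_tcost[OF assms(1-5) _ assms(6)] by (rule le_Psi_if_le_tcost[OF assms(2-5)])

lemma weighted_Psi_inputs_le:
  fixes \<mu> :: "nat \<Rightarrow> 'a::real_inner \<Rightarrow> real"
  assumes "p = 1 \<or> p = 2" "\<forall>i\<in>{1..N}. 0 \<le> lam i" "sum lam {1..N} = 1"
    and "\<forall>i\<in>{1..N}. is_fprob (\<mu> i)" "is_fprob \<nu>"
  shows "(\<Sum>j\<in>{1..N}. lam j * Psi p N lam \<mu> (\<mu> j)) \<le> 2 * Psi p N lam \<mu> \<nu>"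
proof -
  have "(\<Sum>j\<in>{1..N}. lam j * Psi p N lam \<mu> (\<mu> j)) / 2 \<le> Psi p N lam \<mu> \<nu>"
  proof (rule le_Psi_if_le_tcost[OF assms(2-5)])
    fix \<gamma>
    assume "\<forall>i\<in>{1..N}. is_coupling \<nu> (\<mu> i) (\<gamma> i)"
    from weighted_Psi_inputs_le_tcost[OF assms(1-5) this]
    show "(\<Sum>j\<in>{1..N}. lam j * Psi p N lam \<mu> (\<mu> j)) / 2 \<le> (\<Sum>i\<in>{1..N}. lam i * tcost p \<nu> (\<mu> i) (\<gamma> i))"
      by linarith
  qed
  then show ?thesis
    by simp
qed

lemma weighted_Psi_reference_outputs_le:
  fixes \<mu> :: "nat \<Rightarrow> 'a::real_normed_vector \<Rightarrow> real"
  assumes "1 \<le> p" "0 \<le> \<epsilon>" and lam: "\<forall>i\<in>{1..N}. 0 \<le> lam i" and "\<forall>i\<in>{1..N}. is_fprob (\<mu> i)"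
    and spec: "\<forall>j\<in>{1..N}. ref_spec p \<epsilon> N lam \<mu> j (\<pi> j) (m j)"
  shows "(\<Sum>j\<in>{1..N}. lam j * Psi p N lam \<mu> (push (\<mu> j) (m j)))
    \<le> (1 + \<epsilon>) * (\<Sum>j\<in>{1..N}. lam j * Psi p N lam \<mu> (\<mu> j))"
proof -
  have "(\<Sum>j\<in>{1..N}. lam j * Psi p N lam \<mu> (push (\<mu> j) (m j)))
      \<le> (\<Sum>j\<in>{1..N}. lam j * ((1 + \<epsilon>) * Psi p N lam \<mu> (\<mu> j)))"
  proof (intro sum_mono mult_left_mono)
    fix j
    assume j: "j \<in> {1..N}"
    then show "Psi p N lam \<mu> (push (\<mu> j) (m j)) \<le> (1 + \<epsilon>) * Psi p N lam \<mu> (\<mu> j)"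
      using Psi_reference_output_le[OF assms(1-4) j] spec by blast
    show "0 \<le> lam j"
      using lam j by blast
  qed
  then show ?thesis
    by (simp add: sum_distrib_left mult.left_commute)
qed

theorem corollary4p5:
  fixes p N :: nat and \<epsilon> :: real and lam :: "nat \<Rightarrow> real"
    and \<mu> :: "nat \<Rightarrow> 'a::euclidean_space \<Rightarrow> real" and \<nu>hat :: "'a \<Rightarrow> real"
  assumes "p = 1 \<or> p = 2" and "\<epsilon> \<ge> 0" and "p = 2 \<longrightarrow> \<epsilon> = 0"
    and "N \<ge> 2"
    and "\<forall>i\<in>{1..N}. 0 < lam i \<and> lam i < 1" and "(\<Sum>i\<in>{1..N}. lam i) = 1"
    and "\<forall>i\<in>{1..N}. is_fprob (\<mu> i)"
    and "is_fprob \<nu>hat"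
    and "\<forall>\<nu>. is_fprob \<nu> \<longrightarrow> Psi p N lam \<mu> \<nu>hat \<le> Psi p N lam \<mu> \<nu>"
  shows "(\<forall>\<pi> m. ref_spec p \<epsilon> N lam \<mu> 1 \<pi> m \<longrightarrow>
            Psi p N lam \<mu> (push (\<mu> 1) m) \<le> (1 + \<epsilon>) / lam 1 * Psi p N lam \<mu> \<nu>hat)
       \<and> (\<forall>\<pi> m. (\<forall>j\<in>{1..N}. ref_spec p \<epsilon> N lam \<mu> j (\<pi> j) (m j)) \<longrightarrow>
            (\<Sum>j\<in>{1..N}. lam j * Psi p N lam \<mu> (push (\<mu> j) (m j)))
              \<le> 2 * (1 + \<epsilon>) * Psi p N lam \<mu> \<nu>hat)
       \<and> (\<forall>\<pi> m. pair_spec p \<epsilon> N lam \<mu> \<pi> m \<longrightarrow>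
            Psi p N lam \<mu> (pair_output N lam \<mu> m) \<le> 2 * (1 + \<epsilon>) * Psi p N lam \<mu> \<nu>hat)"
proof -
  have lam: "\<forall>i\<in>{1..N}. 0 \<le> lam i"
    using assms(5) by (auto intro: less_imp_le)
  have "1 \<le> p" "(1::nat) \<in> {1..N}" "0 < lam 1" "0 \<le> 1 + \<epsilon>"
    using assms(1,2,4,5) by auto
  have scaled: "(1 + \<epsilon>) * X \<le> 2 * (1 + \<epsilon>) * Psi p N lam \<mu> \<nu>hat"
    if "X \<le> 2 * Psi p N lam \<mu> \<nu>hat" for X
    using mult_left_mono[OF that \<open>0 \<le> 1 + \<epsilon>\<close>] by (simp only: ac_simps)
  note Psi_inputs = scaled[OF weighted_Psi_inputs_le[OF assms(1) lam assms(6-8)]]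
  show ?thesis
  proof (intro conjI allI impI)
    fix \<pi> m
    assume "ref_spec p \<epsilon> N lam \<mu> 1 \<pi> m"
    then have "Psi p N lam \<mu> (push (\<mu> 1) m) \<le> (1 + \<epsilon>) * Psi p N lam \<mu> (\<mu> 1)"
      using Psi_reference_output_le[OF \<open>1 \<le> p\<close> assms(2) lam assms(7) \<open>1 \<in> {1..N}\<close>] by blast
    also have "\<dots> \<le> (1 + \<epsilon>) * (Psi p N lam \<mu> \<nu>hat / lam 1)"
      using lam_Psi_input_le[OF assms(1) lam assms(6-8) \<open>1 \<in> {1..N}\<close>] \<open>0 < lam 1\<close> \<open>0 \<le> 1 + \<epsilon>\<close>
      by (intro mult_left_mono) (simp_all add: pos_le_divide_eq mult.commute)
    finally show "Psi p N lam \<mu> (push (\<mu> 1) m) \<le> (1 + \<epsilon>) / lam 1 * Psi p N lam \<mu> \<nu>hat"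
      by simp
  next
    fix \<pi> m
    assume "\<forall>j\<in>{1..N}. ref_spec p \<epsilon> N lam \<mu> j (\<pi> j) (m j)"
    from weighted_Psi_reference_outputs_le[OF \<open>1 \<le> p\<close> assms(2) lam assms(7) this]
    show "(\<Sum>j\<in>{1..N}. lam j * Psi p N lam \<mu> (push (\<mu> j) (m j))) \<le> 2 * (1 + \<epsilon>) * Psi p N lam \<mu> \<nu>hat"
      using Psi_inputs by (rule order_trans)
  next
    fix \<pi> m
    assume "pair_spec p \<epsilon> N lam \<mu> \<pi> m"
    from Psi_pair_output_le[OF \<open>1 \<le> p\<close> assms(2) lam assms(6,7) this]
    show "Psi p N lam \<mu> (pair_output N lam \<mu> m) \<le> 2 * (1 + \<epsilon>) * Psi p N lam \<mu> \<nu>hat"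
      using Psi_inputs by (rule order_trans)
  qed
qed

end
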